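(* Let $\delta>0$, $n\ge3$, $p\in\mathbb{R}$, let $\varphi_1,\dots,\varphi_{n-1}:[-\delta,\delta]\to\mathbb{R}$ be continuous strictly increasing with $\varphi_j(0)=0$, and $t_1<\dots<t_n$ with $h_j:=t_{j+1}-t_j\le\delta$. Let $H_1,\dots,H_n$ be the associated generalized hat functions, $U_n$ their span, and $s_{i,j}=\langle H_i,H_j\rangle_p$. If $c\in(0,1)$ satisfies $\max_{1\le j\le n-1}\max\{A_{\varphi_j}(h_j),B_{\varphi_j}(h_j)\}\le c$, then $(s_{i,j})$ is row diagonally dominant with factor $c$, and $$\|P^{U_n}\|_{op}\le\max_{t\in[t_1,t_n]}\sum_{j=1}^n|H_j(t)|\cdot\frac{\max_{1\le j\le n-1}\max\{C_{\varphi_j}(h_j),D_{\varphi_j}(h_j)\}}{1-c}.$$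
   Context: $\langle f,g\rangle_p=\int_{t_1}^{t_n}f(t)g(t)e^{pt}\,dt$. $P^{U_n}$ is the $\langle\cdot,\cdot\rangle_p$-orthogonal projection of $C[t_1,t_n]$ onto $U_n$ and $\|P^{U_n}\|_{op}=\sup_{f\neq0}\|P^{U_n}f\|_\infty/\|f\|_\infty$ (sup norm on $[t_1,t_n]$). Row diagonally dominant with factor $c$: $|s_{j-1,j}|+|s_{j,j+1}|\le c\,|s_{j,j}|$ for $j=1,\dots,n$ with $s_{0,1}=s_{n,n+1}=0$. Generalized hat functions: for $2\le j\le n-1$, $H_j(t)=\frac{\varphi_{j-1}(t-t_{j-1})}{\varphi_{j-1}(t_j-t_{j-1})}$ on $[t_{j-1},t_j]$, $H_j(t)=\frac{\varphi_j(t-t_{j+1})}{\varphi_j(t_j-t_{j+1})}$ on $[t_j,t_{j+1}]$, $0$ elsewhere; $H_1=\frac{\varphi_1(t-t_2)}{\varphi_1(t_1-t_2)}$ on $[t_1,t_2]$, $0$ elsewhere; $H_n=\frac{\varphi_{n-1}(t-t_{n-1})}{\varphi_{n-1}(t_n-t_{n-1})}$ on $[t_{n-1},t_n]$, $0$ elsewhere. For $0<h\le\delta$ and $\varphi=\varphi_j$: $A_\varphi(h)=\frac{\varphi(h)}{\varphi(-h)}\frac{\int_0^h\varphi(\tau-h)\varphi(\tau)e^{p\tau}d\tau}{\int_0^h\varphi(\tau)^2e^{p\tau}d\tau}$, $B_\varphi(h)=\frac{\varphi(-h)}{\varphi(h)}\frac{\int_0^h\varphi(\tau-h)\varphi(\tau)e^{p\tau}d\tau}{\int_0^h\varphi(\tau-h)^2e^{p\tau}d\tau}$,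 $C_\varphi(h)=\varphi(h)\frac{\int_0^h\varphi(\tau)e^{p\tau}d\tau}{\int_0^h\varphi(\tau)^2e^{p\tau}d\tau}$, $D_\varphi(h)=\varphi(-h)\frac{\int_0^h\varphi(\tau-h)e^{p\tau}d\tau}{\int_0^h\varphi(\tau-h)^2e^{p\tau}d\tau}$. *)

theory Defs
  imports "HOL-Analysis.Analysis"
begin

definition ipw :: "real \<Rightarrow> real \<Rightarrow> real \<Rightarrow> (real \<Rightarrow> real) \<Rightarrow> (real \<Rightarrow> real) \<Rightarrow> real" where
  "ipw p a b f g = integral {a..b} (\<lambda>s. f s * g s * exp (p * s))"

definition supn :: "real \<Rightarrow> real \<Rightarrow> (real \<Rightarrow> real) \<Rightarrow> real" where
  "supn a b f = Sup ((\<lambda>s. \<bar>f s\<bar>) ` {a..b})"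

text \<open>Generalized hat functions, 1-based indices: nodes t 1 < ... < t n, phi 1 .. phi (n-1).\<close>
definition hat :: "(nat \<Rightarrow> real \<Rightarrow> real) \<Rightarrow> (nat \<Rightarrow> real) \<Rightarrow> nat \<Rightarrow> nat \<Rightarrow> real \<Rightarrow> real" where
  "hat \<phi> t n j s =
    (if j = 1 then
       (if t 1 \<le> s \<and> s \<le> t 2 then \<phi> 1 (s - t 2) / \<phi> 1 (t 1 - t 2) else 0)
     else if j = n then
       (if t (n-1) \<le> s \<and> s \<le> t n then \<phi> (n-1) (s - t (n-1)) / \<phi> (n-1) (t n - t (n-1)) else 0)
     else
       (if t (j-1) \<le> s \<and> s \<le> t j then \<phi> (j-1) (s - t (j-1)) / \<phi> (j-1) (t j - t (j-1))
        else if t j \<le> s \<and> s \<le> t (j+1) then \<phi> j (s - t (j+1)) / \<phi> j (t j - t (j+1))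
        else 0))"

definition Uspan :: "(nat \<Rightarrow> real \<Rightarrow> real) \<Rightarrow> (nat \<Rightarrow> real) \<Rightarrow> nat \<Rightarrow> (real \<Rightarrow> real) set" where
  "Uspan \<phi> t n = {u. \<exists>a::nat \<Rightarrow> real. u = (\<lambda>s. \<Sum>j=1..n. a j * hat \<phi> t n j s)}"

definition proj :: "real \<Rightarrow> (nat \<Rightarrow> real \<Rightarrow> real) \<Rightarrow> (nat \<Rightarrow> real) \<Rightarrow> nat \<Rightarrow> (real \<Rightarrow> real) \<Rightarrow> (real \<Rightarrow> real)" where
  "proj p \<phi> t n f = (THE u. u \<in> Uspan \<phi> t n \<and>
      (\<forall>v \<in> Uspan \<phi> t n. ipw p (t 1) (t n) (\<lambda>s. f s - u s) v = 0))"

definition proj_ratios :: "real \<Rightarrow> (nat \<Rightarrow> real \<Rightarrow> real) \<Rightarrow> (nat \<Rightarrow> real) \<Rightarrow> nat \<Rightarrow> real set" where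
  "proj_ratios p \<phi> t n = {supn (t 1) (t n) (proj p \<phi> t n f) / supn (t 1) (t n) f | f.
      continuous_on {t 1..t n} f \<and> supn (t 1) (t n) f \<noteq> 0}"

definition proj_opnorm :: "real \<Rightarrow> (nat \<Rightarrow> real \<Rightarrow> real) \<Rightarrow> (nat \<Rightarrow> real) \<Rightarrow> nat \<Rightarrow> real" where
  "proj_opnorm p \<phi> t n = Sup (proj_ratios p \<phi> t n)"

text \<open>Row diagonal dominance with factor c (1-based, s_{0,1} = s_{n,n+1} = 0).\<close>
definition row_dd :: "(nat \<Rightarrow> nat \<Rightarrow> real) \<Rightarrow> nat \<Rightarrow> real \<Rightarrow> bool" where
  "row_dd S n c = (\<forall>j\<in>{1..n}.
      (if j = 1 then 0 else \<bar>S (j-1) j\<bar>) + (if j = n then 0 else \<bar>S j (j+1)\<bar>) \<le> c * \<bar>S j j\<bar>)"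

definition Aphi :: "real \<Rightarrow> (real \<Rightarrow> real) \<Rightarrow> real \<Rightarrow> real" where
  "Aphi p \<phi> h = \<phi> h / \<phi> (-h) *
     (integral {0..h} (\<lambda>\<tau>. \<phi> (\<tau> - h) * \<phi> \<tau> * exp (p*\<tau>)) /
      integral {0..h} (\<lambda>\<tau>. \<phi> \<tau> ^ 2 * exp (p*\<tau>)))"

definition Bphi :: "real \<Rightarrow> (real \<Rightarrow> real) \<Rightarrow> real \<Rightarrow> real" where
  "Bphi p \<phi> h = \<phi> (-h) / \<phi> h *
     (integral {0..h} (\<lambda>\<tau>. \<phi> (\<tau> - h) * \<phi> \<tau> * exp (p*\<tau>)) /
      integral {0..h} (\<lambda>\<tau>. \<phi> (\<tau> - h) ^ 2 * exp (p*\<tau>)))"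

definition Cphi :: "real \<Rightarrow> (real \<Rightarrow> real) \<Rightarrow> real \<Rightarrow> real" where
  "Cphi p \<phi> h = \<phi> h *
     (integral {0..h} (\<lambda>\<tau>. \<phi> \<tau> * exp (p*\<tau>)) /
      integral {0..h} (\<lambda>\<tau>. \<phi> \<tau> ^ 2 * exp (p*\<tau>)))"

definition Dphi :: "real \<Rightarrow> (real \<Rightarrow> real) \<Rightarrow> real \<Rightarrow> real" where
  "Dphi p \<phi> h = \<phi> (-h) *
     (integral {0..h} (\<lambda>\<tau>. \<phi> (\<tau> - h) * exp (p*\<tau>)) /
      integral {0..h} (\<lambda>\<tau>. \<phi> (\<tau> - h) ^ 2 * exp (p*\<tau>)))"

end

theory Submission
  imports Defs
begin

text \<open>On [t_k, t_{k+1}] only H_k and H_{k+1} are nonzero, and the constants A, B (resp. C, D)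
  compare their mixed inner product (resp. their weighted integrals) with their squared norms.
  Summing over the segments, the Gram matrix (s_ij) is diagonally dominant with factor c and
  \<open>\<integral> H_j e^{pt} \<le> M s_jj\<close>, where M is the maximum of the C and D constants.
  Writing \<open>P f = \<Sigma> a_j H_j\<close>, the normal equations \<open>\<Sigma>_i a_i s_ij = \<langle>f, H_j\<rangle>\<close> together with
  \<open>|\<langle>f, H_j\<rangle>| \<le> \<parallel>f\<parallel> M s_jj\<close>, read at an index where |a_j| is maximal, give
  \<open>|a_j| \<le> \<parallel>f\<parallel> M / (1 - c)\<close>, and the bound follows from \<open>|P f (t)| \<le> \<Sigma> |a_j| |H_j(t)|\<close>.
  Diagonal dominance also makes the normal equations solvable: the Jacobi iteration is a
  contraction with factor c in the maximum norm.\<close>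

definition col_diag_dominant :: "(nat \<Rightarrow> nat \<Rightarrow> real) \<Rightarrow> nat \<Rightarrow> real \<Rightarrow> bool" where
  "col_diag_dominant S n c \<longleftrightarrow>
     (\<forall>j\<in>{1..n}. 0 < S j j \<and> (\<Sum>i\<in>{1..n}-{j}. \<bar>S i j\<bar>) \<le> c * S j j)"

lemma col_diag_dominant_coeff_bound:
  fixes S :: "nat \<Rightarrow> nat \<Rightarrow> real" and a b :: "nat \<Rightarrow> real"
  assumes dd: "col_diag_dominant S n c" and "c < 1"
    and eq: "\<forall>j\<in>{1..n}. (\<Sum>i=1..n. a i * S i j) = b j"
    and b: "\<forall>j\<in>{1..n}. \<bar>b j\<bar> \<le> K * S j j"
    and j: "j \<in> {1..n}"
  shows "\<bar>a j\<bar> \<le> K / (1 - c)"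
proof -
  define m where "m = Max ((\<lambda>i. \<bar>a i\<bar>) ` {1..n})"
  have am: "\<bar>a i\<bar> \<le> m" if "i \<in> {1..n}" for i
    unfolding m_def using that by (intro Max_ge) auto
  obtain j0 where j0: "j0 \<in> {1..n}" "\<bar>a j0\<bar> = m"
    using Max_in[of "(\<lambda>i. \<bar>a i\<bar>) ` {1..n}"] j unfolding m_def by fastforce
  have S0: "0 < S j0 j0" and off: "(\<Sum>i\<in>{1..n}-{j0}. \<bar>S i j0\<bar>) \<le> c * S j0 j0"
    using dd j0 unfolding col_diag_dominant_def by auto
  have "\<bar>\<Sum>i\<in>{1..n}-{j0}. a i * S i j0\<bar> \<le> (\<Sum>i\<in>{1..n}-{j0}. m * \<bar>S i j0\<bar>)"
    by (rule order_trans[OF sum_abs]) (auto simp: abs_mult intro!: sum_mono mult_right_mono am)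
  also have "\<dots> \<le> m * (c * S j0 j0)"
    using off j0 am by (simp add: sum_distrib_left[symmetric] mult_left_mono)
  finally have rest: "\<bar>\<Sum>i\<in>{1..n}-{j0}. a i * S i j0\<bar> \<le> m * (c * S j0 j0)" .
  have "a j0 * S j0 j0 = b j0 - (\<Sum>i\<in>{1..n}-{j0}. a i * S i j0)"
    using eq[rule_format, OF j0(1)] j0(1) by (simp add: sum.remove)
  then have "m * S j0 j0 \<le> \<bar>b j0\<bar> + \<bar>\<Sum>i\<in>{1..n}-{j0}. a i * S i j0\<bar>"
    using j0 S0 by (metis abs_mult abs_of_pos abs_triangle_ineq4)
  also have "\<dots> \<le> \<bar>b j0\<bar> + m * (c * S j0 j0)" using rest by simp
  also have "\<dots> \<le> K * S j0 j0 + m * (c * S j0 j0)" using b j0 by auto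
  finally have "(m * (1 - c)) * S j0 j0 \<le> K * S j0 j0" by (simp add: algebra_simps)
  then have "m * (1 - c) \<le> K" using S0 by simp
  then have "m \<le> K / (1 - c)" using \<open>c < 1\<close> by (simp add: field_simps)
  then show ?thesis using am[OF j] by linarith
qed

lemma row_dd_if_col_diag_dominant:
  assumes sym: "\<And>i j. S i j = S j i" and dd: "col_diag_dominant S n c"
  shows "row_dd S n c"
  unfolding row_dd_def
proof
  fix j assume j: "j \<in> {1..n}"
  have "(if j = 1 then 0 else \<bar>S (j-1) j\<bar>) + (if j = n then 0 else \<bar>S j (j+1)\<bar>)
      = (\<Sum>i\<in>({1..n}-{j}) \<inter> {j-1, j+1}. \<bar>S i j\<bar>)"
  proof -
    consider "j = 1" "j = n" | "j = 1" "j \<noteq> n" | "j \<noteq> 1" "j = n" | "j \<noteq> 1" "j \<noteq> n" by blast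
    then show ?thesis
    proof cases
      case 2
      then have "({1..n}-{j}) \<inter> {j-1, j+1} = {2}" using j by auto
      then show ?thesis using 2 sym by (simp add: numeral_2_eq_2)
    next
      case 3
      then have "({1..n}-{j}) \<inter> {j-1, j+1} = {j-1}" using j by auto
      then show ?thesis using 3 by simp
    next
      case 4
      then have "({1..n}-{j}) \<inter> {j-1, j+1} = {j-1, j+1}" using j by auto
      then show ?thesis using 4 sym by simp
    qed auto
  qed
  also have "\<dots> \<le> (\<Sum>i\<in>{1..n}-{j}. \<bar>S i j\<bar>)" by (rule sum_mono2) auto
  also have "\<dots> \<le> c * \<bar>S j j\<bar>"
    using dd j unfolding col_diag_dominant_def by (metis abs_of_pos)
  finally show "(if j = 1 then 0 else \<bar>S (j-1) j\<bar>) + (if j = n then 0 else \<bar>S j (j+1)\<bar>) \<le> c * \<bar>S j j\<bar>" .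
qed

definition jacobi_step :: "(nat \<Rightarrow> nat \<Rightarrow> real) \<Rightarrow> nat \<Rightarrow> (nat \<Rightarrow> real) \<Rightarrow> (nat \<Rightarrow> real) \<Rightarrow> nat \<Rightarrow> real" where
  "jacobi_step S n b a j = (b j - (\<Sum>i\<in>{1..n}-{j}. a i * S i j)) / S j j"

lemma jacobi_step_contraction:
  assumes dd: "col_diag_dominant S n c"
    and e: "\<forall>i\<in>{1..n}. \<bar>a i - a' i\<bar> \<le> e" and j: "j \<in> {1..n}"
  shows "\<bar>jacobi_step S n b a j - jacobi_step S n b a' j\<bar> \<le> c * e"
proof -
  have S0: "0 < S j j" and off: "(\<Sum>i\<in>{1..n}-{j}. \<bar>S i j\<bar>) \<le> c * S j j"
    using dd j unfolding col_diag_dominant_def by auto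
  have "0 \<le> e" using e j by force
  have "\<bar>jacobi_step S n b a j - jacobi_step S n b a' j\<bar>
      = \<bar>\<Sum>i\<in>{1..n}-{j}. (a' i - a i) * S i j\<bar> / S j j"
    unfolding jacobi_step_def using S0
    by (simp add: diff_divide_distrib[symmetric] sum_subtractf[symmetric] algebra_simps)
  also have "\<dots> \<le> (\<Sum>i\<in>{1..n}-{j}. e * \<bar>S i j\<bar>) / S j j"
    using S0 e by (intro divide_right_mono order_trans[OF sum_abs] sum_mono)
      (auto simp: abs_mult abs_minus_commute intro!: mult_right_mono)
  also have "\<dots> \<le> e * (c * S j j) / S j j"
    unfolding sum_distrib_left[symmetric] using off S0 \<open>0 \<le> e\<close>
    by (intro divide_right_mono mult_left_mono) auto
  also have "\<dots> = c * e" using S0 by simp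
  finally show ?thesis .
qed

lemma jacobi_fixpoint_solves:
  assumes "0 < S j j" and "jacobi_step S n b a j = a j" and "j \<in> {1..n}"
  shows "(\<Sum>i=1..n. a i * S i j) = b j"
proof -
  have "(\<Sum>i=1..n. a i * S i j) = a j * S j j + (\<Sum>i\<in>{1..n}-{j}. a i * S i j)"
    using assms(3) by (simp add: sum.remove)
  then show ?thesis using assms(1,2) unfolding jacobi_step_def by (simp add: field_simps)
qed

lemma col_diag_dominant_solvable:
  fixes S :: "nat \<Rightarrow> nat \<Rightarrow> real" and b :: "nat \<Rightarrow> real"
  assumes dd: "col_diag_dominant S n c" and c: "0 \<le> c" "c < 1"
  shows "\<exists>a. \<forall>j\<in>{1..n}. (\<Sum>i=1..n. a i * S i j) = b j"
proof -
  define T where "T = jacobi_step S n b"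
  define x where "x m = (T ^^ m) (\<lambda>_. 0)" for m
  have x_Suc: "x (Suc m) = T (x m)" for m by (simp add: x_def)
  define K where "K = Max ((\<lambda>i. \<bar>x 1 i - x 0 i\<bar>) ` {1..n})"
  have step: "\<forall>i\<in>{1..n}. \<bar>x (Suc m) i - x m i\<bar> \<le> c ^ m * K" for m
  proof (induction m)
    case 0 then show ?case unfolding K_def by (auto intro: Max_ge)
  next
    case (Suc m)
    then show ?case unfolding x_Suc[of "Suc m"] x_Suc[of m] T_def
      using jacobi_step_contraction[OF dd] by (simp add: mult.assoc)
  qed
  define L where "L j = x 0 j + (\<Sum>m. x (Suc m) j - x m j)" for j
  have lim: "(\<lambda>m. x m j) \<longlonglongrightarrow> L j" if j: "j \<in> {1..n}" for j
  proof -
    have "summable (\<lambda>m. K * c ^ m)" using c by simp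
    then have "summable (\<lambda>m. x (Suc m) j - x m j)"
      by (rule summable_comparison_test[rotated]) (use step j in \<open>auto simp: mult.commute\<close>)
    then have "(\<lambda>m. x 0 j + (\<Sum>i<m. x (Suc i) j - x i j)) \<longlonglongrightarrow> L j"
      unfolding L_def by (intro tendsto_intros summable_LIMSEQ)
    moreover have "x 0 j + (\<Sum>i<m. x (Suc i) j - x i j) = x m j" for m
      by (induction m) auto
    ultimately show ?thesis by simp
  qed
  have "T L j = L j" if j: "j \<in> {1..n}" for j
  proof -
    have "S j j \<noteq> 0" using dd j unfolding col_diag_dominant_def by force
    have "(\<lambda>m. T (x m) j) \<longlonglongrightarrow> T L j"
      unfolding T_def jacobi_step_def using lim \<open>S j j \<noteq> 0\<close> by (auto intro!: tendsto_intros)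
    moreover have "(\<lambda>m. T (x m) j) \<longlonglongrightarrow> L j"
      using LIMSEQ_Suc[OF lim[OF j]] by (simp add: x_Suc)
    ultimately show ?thesis by (rule LIMSEQ_unique)
  qed
  then show ?thesis
    using dd jacobi_fixpoint_solves unfolding T_def col_diag_dominant_def by blast
qed

lemma abs_le_supn:
  assumes "continuous_on {a..b} f" and "s \<in> {a..b}"
  shows "\<bar>f s\<bar> \<le> supn a b f"
  unfolding supn_def using assms
  by (intro cSup_upper imageI bounded_imp_bdd_above compact_imp_bounded compact_continuous_image
      continuous_intros) auto

lemma ipw_commute: "ipw p a b f g = ipw p a b g f"
  unfolding ipw_def by (simp add: mult_ac)

lemma ipw_zero_left [simp]: "ipw p a b (\<lambda>_. 0) g = 0"
  unfolding ipw_def by simp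

lemma ipw_nonneg:
  assumes "continuous_on {a..b} f" "continuous_on {a..b} g"
    and "\<And>s. s \<in> {a..b} \<Longrightarrow> 0 \<le> f s" "\<And>s. s \<in> {a..b} \<Longrightarrow> 0 \<le> g s"
  shows "0 \<le> ipw p a b f g"
  unfolding ipw_def using assms
  by (intro integral_nonneg) (auto intro!: integrable_continuous_interval continuous_intros)

lemma ipw_self_pos:
  assumes "continuous_on {a..b} f" and "a < b" and "s0 \<in> {a..b}" "f s0 \<noteq> 0"
  shows "0 < ipw p a b f f"
proof -
  have cont: "continuous_on {a..b} (\<lambda>s. f s * f s * exp (p * s))"
    using assms(1) by (intro continuous_intros)
  have "0 \<le> ipw p a b f f" using assms(1) unfolding ipw_def
    by (intro integral_nonneg) (auto intro!: integrable_continuous_interval cont)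
  moreover have "ipw p a b f f \<noteq> 0"
    unfolding ipw_def using integral_eq_0_iff[OF cont \<open>a < b\<close>] assms(3,4) by auto
  ultimately show ?thesis by linarith
qed

lemma ipw_sum_right:
  assumes "continuous_on {a..b} f" and "finite J" and "\<And>j. j \<in> J \<Longrightarrow> continuous_on {a..b} (g j)"
  shows "ipw p a b f (\<lambda>s. \<Sum>j\<in>J. \<beta> j * g j s) = (\<Sum>j\<in>J. \<beta> j * ipw p a b f (g j))"
proof -
  have "ipw p a b f (\<lambda>s. \<Sum>j\<in>J. \<beta> j * g j s)
      = integral {a..b} (\<lambda>s. \<Sum>j\<in>J. \<beta> j * (f s * g j s * exp (p * s)))"
    unfolding ipw_def by (simp add: sum_distrib_left sum_distrib_right mult_ac)
  also have "\<dots> = (\<Sum>j\<in>J. \<beta> j * ipw p a b f (g j))"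
    unfolding ipw_def using assms
    by (subst integral_sum) (auto intro!: integrable_continuous_interval continuous_intros)
  finally show ?thesis .
qed

lemma ipw_diff_left:
  assumes "continuous_on {a..b} f" "continuous_on {a..b} u" "continuous_on {a..b} v"
  shows "ipw p a b (\<lambda>s. f s - u s) v = ipw p a b f v - ipw p a b u v"
  unfolding ipw_def using assms
  by (subst integral_diff[symmetric])
     (auto simp: algebra_simps intro!: integrable_continuous_interval continuous_intros)

lemma has_integral_ipw_shift:
  assumes "continuous_on {0..h} f" "continuous_on {0..h} g"
  shows "((\<lambda>s. f (s - a) * g (s - a) * exp (p * s)) has_integral exp (p * a) * ipw p 0 h f g) {a..a + h}"
proof -
  have "((\<lambda>\<tau>. exp (p * a) * (f \<tau> * g \<tau> * exp (p * \<tau>))) has_integral exp (p * a) * ipw p 0 h f g) {0..h}"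
    unfolding ipw_def using assms
    by (intro has_integral_mult_right integrable_integral integrable_continuous_interval continuous_intros)
  also have "(\<lambda>\<tau>. exp (p * a) * (f \<tau> * g \<tau> * exp (p * \<tau>)))
      = (\<lambda>s. f (s - a) * g (s - a) * exp (p * s)) \<circ> (+) a"
    by (auto simp: fun_eq_iff algebra_simps exp_add[symmetric])
  finally show ?thesis
    unfolding has_integral_shift_Icc_real by (simp add: add.commute)
qed

lemma has_integral_consecutive_intervals:
  fixes t :: "nat \<Rightarrow> real" and g :: "real \<Rightarrow> real"
  assumes "\<And>k. k \<in> {1..m} \<Longrightarrow> t k \<le> t (Suc k)"
    and "\<And>k. k \<in> {1..m} \<Longrightarrow> (g has_integral I k) {t k..t (Suc k)}"
  shows "(g has_integral (\<Sum>k=1..m. I k)) {t 1..t (Suc m)}"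
  using assms
proof (induction m)
  case 0
  show ?case using has_integral_refl(1)[of g "t 1"] by simp
next
  case (Suc m)
  have "t 1 \<le> t (Suc m)"
    using Suc.prems(1) by (induction m) (auto intro: order_trans)
  moreover have "t (Suc m) \<le> t (Suc (Suc m))" using Suc.prems(1) by simp
  moreover have "(g has_integral (\<Sum>k=1..m. I k)) {t 1..t (Suc m)}" using Suc by simp
  moreover have "(g has_integral I (Suc m)) {t (Suc m)..t (Suc (Suc m))}" using Suc.prems(2) by simp
  ultimately have "(g has_integral (\<Sum>k=1..m. I k) + I (Suc m)) {t 1..t (Suc (Suc m))}"
    by (rule has_integral_combine)
  then show ?case by simp
qed

lemma ipw_eq_sum_segments:
  fixes t :: "nat \<Rightarrow> real"
  assumes mono: "\<And>k. k \<in> {1..m} \<Longrightarrow> t k \<le> t (Suc k)"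
    and cont: "\<And>k. k \<in> {1..m} \<Longrightarrow> continuous_on {0..t (Suc k) - t k} (F k)"
      "\<And>k. k \<in> {1..m} \<Longrightarrow> continuous_on {0..t (Suc k) - t k} (G k)"
    and f: "\<And>k s. k \<in> {1..m} \<Longrightarrow> s \<in> {t k..t (Suc k)} \<Longrightarrow> f s = F k (s - t k)"
    and g: "\<And>k s. k \<in> {1..m} \<Longrightarrow> s \<in> {t k..t (Suc k)} \<Longrightarrow> g s = G k (s - t k)"
  shows "ipw p (t 1) (t (Suc m)) f g = (\<Sum>k=1..m. exp (p * t k) * ipw p 0 (t (Suc k) - t k) (F k) (G k))"
  unfolding ipw_def[of p "t 1"]
proof (rule integral_unique, rule has_integral_consecutive_intervals[where m = m and t = t, OF mono])
  fix k assume k: "k \<in> {1..m}"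
  have "((\<lambda>s. F k (s - t k) * G k (s - t k) * exp (p * s))
      has_integral exp (p * t k) * ipw p 0 (t (Suc k) - t k) (F k) (G k)) {t k..t (Suc k)}"
    using has_integral_ipw_shift[OF cont(1,2)[OF k], where p = p and a = "t k"] by simp
  then show "((\<lambda>s. f s * g s * exp (p * s))
      has_integral exp (p * t k) * ipw p 0 (t (Suc k) - t k) (F k) (G k)) {t k..t (Suc k)}"
    by (rule has_integral_cong[THEN iffD1, rotated]) (use k f g in auto)
qed

text \<open>On [t_k, t_{k+1}], shifted to [0, h_k], the hat functions H_k and H_{k+1}
  are the left and right pieces of \<open>\<phi>_k\<close>.\<close>

definition left_piece :: "(real \<Rightarrow> real) \<Rightarrow> real \<Rightarrow> real \<Rightarrow> real" where
  "left_piece \<phi> h \<tau> = \<phi> (\<tau> - h) / \<phi> (-h)"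

definition right_piece :: "(real \<Rightarrow> real) \<Rightarrow> real \<Rightarrow> real \<Rightarrow> real" where
  "right_piece \<phi> h \<tau> = \<phi> \<tau> / \<phi> h"

context
  fixes \<phi> :: "real \<Rightarrow> real" and h :: real
  assumes nonzero: "\<phi> h \<noteq> 0" "\<phi> (-h) \<noteq> 0"
begin

lemma Aphi_eq_ipw_ratio:
  "Aphi p \<phi> h = ipw p 0 h (left_piece \<phi> h) (right_piece \<phi> h) / ipw p 0 h (right_piece \<phi> h) (right_piece \<phi> h)"
  unfolding Aphi_def ipw_def left_piece_def right_piece_def using nonzero
  by (simp add: power2_eq_square field_simps)

lemma Bphi_eq_ipw_ratio:
  "Bphi p \<phi> h = ipw p 0 h (left_piece \<phi> h) (right_piece \<phi> h) / ipw p 0 h (left_piece \<phi> h) (left_piece \<phi> h)"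
  unfolding Bphi_def ipw_def left_piece_def right_piece_def using nonzero
  by (simp add: power2_eq_square field_simps)

lemma Cphi_eq_ipw_ratio:
  "Cphi p \<phi> h = ipw p 0 h (right_piece \<phi> h) (\<lambda>_. 1) / ipw p 0 h (right_piece \<phi> h) (right_piece \<phi> h)"
  unfolding Cphi_def ipw_def left_piece_def right_piece_def using nonzero
  by (simp add: power2_eq_square field_simps)

lemma Dphi_eq_ipw_ratio:
  "Dphi p \<phi> h = ipw p 0 h (left_piece \<phi> h) (\<lambda>_. 1) / ipw p 0 h (left_piece \<phi> h) (left_piece \<phi> h)"
  unfolding Dphi_def ipw_def left_piece_def right_piece_def using nonzero
  by (simp add: power2_eq_square field_simps)

end

locale hat_profile =
  fixes \<delta> h :: real and \<phi> :: "real \<Rightarrow> real"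
  assumes continuous: "continuous_on {-\<delta>..\<delta>} \<phi>"
    and strict_mono: "strict_mono_on {-\<delta>..\<delta>} \<phi>"
    and zero: "\<phi> 0 = 0"
    and step: "0 < h" "h \<le> \<delta>"
begin

lemma phi_pos: "0 < \<phi> h" and phi_neg: "\<phi> (-h) < 0"
  using strict_mono_onD[OF strict_mono, of 0 h] strict_mono_onD[OF strict_mono, of "-h" 0] zero step
  by auto

lemma left_piece_nonneg: "\<tau> \<in> {0..h} \<Longrightarrow> 0 \<le> left_piece \<phi> h \<tau>"
  using strict_mono_on_leD[OF strict_mono, of "\<tau> - h" 0] zero step phi_neg
  unfolding left_piece_def by (auto intro: divide_nonpos_neg)

lemma right_piece_nonneg: "\<tau> \<in> {0..h} \<Longrightarrow> 0 \<le> right_piece \<phi> h \<tau>"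
  using strict_mono_on_leD[OF strict_mono, of 0 \<tau>] zero step phi_pos
  unfolding right_piece_def by auto

lemma continuous_on_left_piece: "continuous_on {0..h} (left_piece \<phi> h)"
  unfolding left_piece_def using step phi_neg
  by (intro continuous_intros continuous_on_compose2[OF continuous]) auto

lemma continuous_on_right_piece: "continuous_on {0..h} (right_piece \<phi> h)"
  unfolding right_piece_def using step phi_pos
  by (intro continuous_intros continuous_on_subset[OF continuous]) auto

lemma left_piece_start [simp]: "left_piece \<phi> h 0 = 1"
  and right_piece_end [simp]: "right_piece \<phi> h h = 1"
  using phi_pos phi_neg unfolding left_piece_def right_piece_def by auto

lemma ipw_left_piece_pos: "0 < ipw p 0 h (left_piece \<phi> h) (left_piece \<phi> h)"
  using step by (intro ipw_self_pos[OF continuous_on_left_piece, of 0]) auto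

lemma ipw_right_piece_pos: "0 < ipw p 0 h (right_piece \<phi> h) (right_piece \<phi> h)"
  using step by (intro ipw_self_pos[OF continuous_on_right_piece, of h]) auto

lemma ipw_pieces_nonneg: "0 \<le> ipw p 0 h (left_piece \<phi> h) (right_piece \<phi> h)"
  by (intro ipw_nonneg continuous_on_left_piece continuous_on_right_piece
      left_piece_nonneg right_piece_nonneg)

lemma ipw_pieces_le_Aphi:
  assumes "Aphi p \<phi> h \<le> c"
  shows "ipw p 0 h (left_piece \<phi> h) (right_piece \<phi> h) \<le> c * ipw p 0 h (right_piece \<phi> h) (right_piece \<phi> h)"
  using assms ipw_right_piece_pos[of p] phi_pos phi_neg
  by (simp add: Aphi_eq_ipw_ratio pos_divide_le_eq)

lemma ipw_pieces_le_Bphi: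
  assumes "Bphi p \<phi> h \<le> c"
  shows "ipw p 0 h (left_piece \<phi> h) (right_piece \<phi> h) \<le> c * ipw p 0 h (left_piece \<phi> h) (left_piece \<phi> h)"
  using assms ipw_left_piece_pos[of p] phi_pos phi_neg
  by (simp add: Bphi_eq_ipw_ratio pos_divide_le_eq)

lemma ipw_right_piece_one_le_Cphi:
  assumes "Cphi p \<phi> h \<le> M"
  shows "ipw p 0 h (right_piece \<phi> h) (\<lambda>_. 1) \<le> M * ipw p 0 h (right_piece \<phi> h) (right_piece \<phi> h)"
  using assms ipw_right_piece_pos[of p] phi_pos phi_neg
  by (simp add: Cphi_eq_ipw_ratio pos_divide_le_eq)

lemma ipw_left_piece_one_le_Dphi:
  assumes "Dphi p \<phi> h \<le> M"
  shows "ipw p 0 h (left_piece \<phi> h) (\<lambda>_. 1) \<le> M * ipw p 0 h (left_piece \<phi> h) (left_piece \<phi> h)"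
  using assms ipw_left_piece_pos[of p] phi_pos phi_neg
  by (simp add: Dphi_eq_ipw_ratio pos_divide_le_eq)

end

locale hat_nodes =
  fixes \<delta> p :: real and n :: nat and \<phi> :: "nat \<Rightarrow> real \<Rightarrow> real" and t :: "nat \<Rightarrow> real"
  assumes n_ge_3: "n \<ge> 3"
    and profiles: "\<forall>j\<in>{1..n-1}. continuous_on {-\<delta>..\<delta>} (\<phi> j) \<and> strict_mono_on {-\<delta>..\<delta>} (\<phi> j) \<and> \<phi> j 0 = 0"
    and nodes_increasing: "\<forall>j\<in>{1..n-1}. t j < t (j+1)"
    and steps_le: "\<forall>j\<in>{1..n-1}. t (j+1) - t j \<le> \<delta>"
begin

lemma hat_profile_segment: "k \<in> {1..n-1} \<Longrightarrow> hat_profile \<delta> (t (Suc k) - t k) (\<phi> k)"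
  using profiles nodes_increasing steps_le by unfold_locales auto

lemma nodes_less: assumes "1 \<le> i" "i < j" "j \<le> n" shows "t i < t j"
  using assms
proof (induction j)
  case (Suc j)
  then have "t j < t (Suc j)" using nodes_increasing by auto
  with Suc show ?case by (cases "i = j") auto
qed simp

lemma nodes_le: "1 \<le> i \<Longrightarrow> i \<le> j \<Longrightarrow> j \<le> n \<Longrightarrow> t i \<le> t j"
  using nodes_less[of i j] by (cases "i = j") auto

lemma hat_zero_right:
  assumes j: "j \<in> {1..n-1}" and s: "t (Suc j) \<le> s"
  shows "hat \<phi> t n j s = 0"
proof -
  have "\<phi> j 0 = 0" "t j < t (Suc j)" using profiles nodes_increasing j by auto
  with s j show ?thesis unfolding hat_def by (auto simp: numeral_2_eq_2)
qed

lemma hat_zero_left: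
  assumes j: "j \<in> {2..n}" and s: "s \<le> t (j-1)"
  shows "hat \<phi> t n j s = 0"
proof -
  have j1: "j - 1 \<in> {1..n-1}" "Suc (j - 1) = j" using j by auto
  have "\<phi> (j-1) 0 = 0" "t (j-1) < t j" using profiles nodes_increasing j1 by (metis Suc_eq_plus1)+
  with s j show ?thesis unfolding hat_def by auto
qed

lemma hat_eq_left_piece:
  assumes k: "k \<in> {1..n-1}" and s: "s \<in> {t k..t (Suc k)}"
  shows "hat \<phi> t n k s = left_piece (\<phi> k) (t (Suc k) - t k) (s - t k)"
proof (cases "k = 1")
  case True
  then show ?thesis using s unfolding hat_def left_piece_def by (simp add: numeral_2_eq_2)
next
  case False
  have k1: "k - 1 \<in> {1..n-1}" "Suc (k - 1) = k" using k False by auto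
  then have "\<phi> (k-1) (t k - t (k-1)) \<noteq> 0"
    using hat_profile.phi_pos[OF hat_profile_segment[OF k1(1)]] by simp
  moreover have "\<phi> k (t k - t (Suc k)) \<noteq> 0"
    using hat_profile.phi_neg[OF hat_profile_segment[OF k]] by simp
  ultimately show ?thesis
    using False k s unfolding hat_def left_piece_def by (auto simp: algebra_simps)
qed

lemma hat_eq_right_piece:
  assumes k: "k \<in> {1..n-1}" and s: "s \<in> {t k..t (Suc k)}"
  shows "hat \<phi> t n (Suc k) s = right_piece (\<phi> k) (t (Suc k) - t k) (s - t k)"
  using k s unfolding hat_def right_piece_def by auto

definition hat_piece :: "nat \<Rightarrow> nat \<Rightarrow> real \<Rightarrow> real" where
  "hat_piece k j =
     (if j = k then left_piece (\<phi> k) (t (Suc k) - t k)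
      else if j = Suc k then right_piece (\<phi> k) (t (Suc k) - t k)
      else (\<lambda>_. 0))"

lemma hat_on_segment:
  assumes k: "k \<in> {1..n-1}" and s: "s \<in> {t k..t (Suc k)}" and j: "j \<in> {1..n}"
  shows "hat \<phi> t n j s = hat_piece k j (s - t k)"
proof -
  consider "j = k" | "j = Suc k" | "j < k" | "Suc k < j" by linarith
  then show ?thesis
  proof cases
    case 3
    then have "t (Suc j) \<le> t k" using nodes_le[of "Suc j" k] k by auto
    then have "t (Suc j) \<le> s" using s by auto
    then show ?thesis using 3 hat_zero_right[of j s] k j unfolding hat_piece_def by auto
  next
    case 4
    then have "t (Suc k) \<le> t (j-1)" using nodes_le[of "Suc k" "j-1"] j by auto
    then have "s \<le> t (j-1)" using s by auto
    then show ?thesis using 4 hat_zero_left[of j s] k j unfolding hat_piece_def by auto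
  qed (use hat_eq_left_piece hat_eq_right_piece k s in \<open>auto simp: hat_piece_def\<close>)
qed

lemma continuous_on_hat_piece:
  assumes k: "k \<in> {1..n-1}"
  shows "continuous_on {0..t (Suc k) - t k} (hat_piece k j)"
proof -
  interpret hat_profile \<delta> "t (Suc k) - t k" "\<phi> k" using hat_profile_segment[OF k] .
  show ?thesis
    unfolding hat_piece_def using continuous_on_left_piece continuous_on_right_piece by auto
qed

lemma hat_piece_nonneg:
  assumes k: "k \<in> {1..n-1}" and "\<tau> \<in> {0..t (Suc k) - t k}"
  shows "0 \<le> hat_piece k j \<tau>"
proof -
  interpret hat_profile \<delta> "t (Suc k) - t k" "\<phi> k" using hat_profile_segment[OF k] .
  show ?thesis
    unfolding hat_piece_def using left_piece_nonneg right_piece_nonneg assms(2) by auto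
qed

lemma segments_cover:
  assumes "s \<in> {t 1..t n}"
  obtains k where "k \<in> {1..n-1}" "s \<in> {t k..t (Suc k)}"
proof -
  define K where "K = {k \<in> {1..n-1}. t k \<le> s}"
  have K: "finite K" "1 \<in> K" unfolding K_def using assms n_ge_3 by auto
  define k where "k = Max K"
  have "k \<in> K" unfolding k_def using Max_in K by blast
  then have k: "k \<in> {1..n-1}" "t k \<le> s" unfolding K_def by auto
  have "s \<le> t (Suc k)"
  proof (cases "k = n - 1")
    case False
    then have "Suc k \<notin> K" using Max_ge[OF K(1), of "Suc k"] unfolding k_def by auto
    then show ?thesis using k False unfolding K_def by auto
  qed (use assms n_ge_3 in auto)
  with k that show ?thesis by auto
qed

lemma continuous_on_hat:
  assumes j: "j \<in> {1..n}"
  shows "continuous_on {t 1..t n} (hat \<phi> t n j)"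
proof -
  have segments: "{t 1..t n} = (\<Union>k\<in>{1..n-1}. {t k..t (Suc k)})"
  proof
    show "{t 1..t n} \<subseteq> (\<Union>k\<in>{1..n-1}. {t k..t (Suc k)})"
      by (blast elim: segments_cover)
    show "(\<Union>k\<in>{1..n-1}. {t k..t (Suc k)}) \<subseteq> {t 1..t n}"
    proof (intro UN_least subsetI)
      fix k s assume k: "k \<in> {1..n-1}" and "s \<in> {t k..t (Suc k)}"
      moreover have "t 1 \<le> t k" "t (Suc k) \<le> t n" using nodes_le[of 1 k] nodes_le[of "Suc k" n] k by auto
      ultimately show "s \<in> {t 1..t n}" by auto
    qed
  qed
  have "continuous_on {t k..t (Suc k)} (hat \<phi> t n j)" if k: "k \<in> {1..n-1}" for k
  proof -
    have "continuous_on {t k..t (Suc k)} (\<lambda>s. hat_piece k j (s - t k))"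
      by (rule continuous_on_compose2[OF continuous_on_hat_piece[OF k]])
        (auto intro!: continuous_intros)
    then show ?thesis
      by (rule continuous_on_cong[THEN iffD1, rotated 2]) (use hat_on_segment[OF k _ j] in auto)
  qed
  then show ?thesis unfolding segments by (intro continuous_on_closed_Union) auto
qed

lemma hat_nonneg:
  assumes "j \<in> {1..n}" and "s \<in> {t 1..t n}"
  shows "0 \<le> hat \<phi> t n j s"
proof -
  obtain k where k: "k \<in> {1..n-1}" "s \<in> {t k..t (Suc k)}" using segments_cover[OF assms(2)] .
  then show ?thesis using hat_on_segment[OF k assms(1)] hat_piece_nonneg[OF k(1)] by auto
qed

lemma ipw_hat_eq_sum_segments:
  assumes "i \<in> {1..n}" "j \<in> {1..n}"
  shows "ipw p (t 1) (t n) (hat \<phi> t n i) (hat \<phi> t n j)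
    = (\<Sum>k=1..n-1. exp (p * t k) * ipw p 0 (t (Suc k) - t k) (hat_piece k i) (hat_piece k j))"
  using ipw_eq_sum_segments[where m = "n-1" and t = t, OF _ continuous_on_hat_piece continuous_on_hat_piece
      hat_on_segment hat_on_segment] assms nodes_increasing n_ge_3 by (simp add: less_imp_le)

lemma ipw_hat_one_eq_sum_segments:
  assumes "j \<in> {1..n}"
  shows "ipw p (t 1) (t n) (hat \<phi> t n j) (\<lambda>_. 1)
    = (\<Sum>k=1..n-1. exp (p * t k) * ipw p 0 (t (Suc k) - t k) (hat_piece k j) (\<lambda>_. 1))"
  using ipw_eq_sum_segments[where m = "n-1" and t = t and G = "\<lambda>_ _. 1", OF _ continuous_on_hat_piece _
      hat_on_segment] assms nodes_increasing n_ge_3 by (simp add: less_imp_le)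

end

locale hat_nodes_dominant = hat_nodes +
  fixes c M :: real
  assumes c_pos: "0 < c" and c_less_1: "c < 1"
    and AB_le: "\<forall>k\<in>{1..n-1}. Aphi p (\<phi> k) (t (Suc k) - t k) \<le> c \<and> Bphi p (\<phi> k) (t (Suc k) - t k) \<le> c"
    and CD_le: "\<forall>k\<in>{1..n-1}. Cphi p (\<phi> k) (t (Suc k) - t k) \<le> M \<and> Dphi p (\<phi> k) (t (Suc k) - t k) \<le> M"
begin

definition gram :: "nat \<Rightarrow> nat \<Rightarrow> real" where
  "gram i j = ipw p (t 1) (t n) (hat \<phi> t n i) (hat \<phi> t n j)"

lemma segment_offdiag_le:
  assumes k: "k \<in> {1..n-1}"
  shows "(\<Sum>i\<in>{1..n}-{j}. \<bar>ipw p 0 (t (Suc k) - t k) (hat_piece k i) (hat_piece k j)\<bar>)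
    \<le> c * ipw p 0 (t (Suc k) - t k) (hat_piece k j) (hat_piece k j)"
proof -
  interpret hat_profile \<delta> "t (Suc k) - t k" "\<phi> k" using hat_profile_segment[OF k] .
  let ?L = "left_piece (\<phi> k) (t (Suc k) - t k)" and ?R = "right_piece (\<phi> k) (t (Suc k) - t k)"
  have cross: "\<bar>ipw p 0 (t (Suc k) - t k) ?L ?R\<bar> = ipw p 0 (t (Suc k) - t k) ?L ?R"
    using ipw_pieces_nonneg by simp
  consider "j = k" | "j = Suc k" | "j \<noteq> k" "j \<noteq> Suc k" by blast
  then show ?thesis
  proof cases
    case 1
    have "(\<Sum>i\<in>{1..n}-{j}. \<bar>ipw p 0 (t (Suc k) - t k) (hat_piece k i) (hat_piece k j)\<bar>)
        = (\<Sum>i\<in>{1..n}-{j}. if i = Suc k then ipw p 0 (t (Suc k) - t k) ?L ?R else 0)"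
      using 1 cross by (intro sum.cong) (auto simp: hat_piece_def ipw_commute)
    also have "\<dots> \<le> c * ipw p 0 (t (Suc k) - t k) ?L ?L"
      using 1 k ipw_pieces_le_Bphi AB_le by auto
    finally show ?thesis using 1 by (simp add: hat_piece_def)
  next
    case 2
    have "(\<Sum>i\<in>{1..n}-{j}. \<bar>ipw p 0 (t (Suc k) - t k) (hat_piece k i) (hat_piece k j)\<bar>)
        = (\<Sum>i\<in>{1..n}-{j}. if i = k then ipw p 0 (t (Suc k) - t k) ?L ?R else 0)"
      using 2 cross by (intro sum.cong) (auto simp: hat_piece_def)
    also have "\<dots> \<le> c * ipw p 0 (t (Suc k) - t k) ?R ?R"
      using 2 k ipw_pieces_le_Aphi AB_le by auto
    finally show ?thesis using 2 by (simp add: hat_piece_def)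
  next
    case 3
    then show ?thesis by (simp add: hat_piece_def ipw_commute)
  qed
qed

lemma segment_moment_le:
  assumes k: "k \<in> {1..n-1}"
  shows "ipw p 0 (t (Suc k) - t k) (hat_piece k j) (\<lambda>_. 1)
    \<le> M * ipw p 0 (t (Suc k) - t k) (hat_piece k j) (hat_piece k j)"
proof -
  interpret hat_profile \<delta> "t (Suc k) - t k" "\<phi> k" using hat_profile_segment[OF k] .
  show ?thesis
    using ipw_left_piece_one_le_Dphi ipw_right_piece_one_le_Cphi CD_le k
    unfolding hat_piece_def by auto
qed

lemma gram_eq_sum_segments:
  "i \<in> {1..n} \<Longrightarrow> j \<in> {1..n} \<Longrightarrow>
    gram i j = (\<Sum>k=1..n-1. exp (p * t k) * ipw p 0 (t (Suc k) - t k) (hat_piece k i) (hat_piece k j))"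
  unfolding gram_def by (rule ipw_hat_eq_sum_segments)

lemma segment_diag_nonneg:
  "k \<in> {1..n-1} \<Longrightarrow> 0 \<le> exp (p * t k) * ipw p 0 (t (Suc k) - t k) (hat_piece k j) (hat_piece k j)"
  by (intro mult_nonneg_nonneg ipw_nonneg continuous_on_hat_piece hat_piece_nonneg) auto

lemma gram_diag_pos:
  assumes j: "j \<in> {1..n}"
  shows "0 < gram j j"
proof -
  obtain k where k: "k \<in> {1..n-1}" and jk: "j = k \<or> j = Suc k"
    using j n_ge_3 by (cases "j \<le> n - 1") (auto intro: that[of j] that[of "n - 1"])
  interpret hat_profile \<delta> "t (Suc k) - t k" "\<phi> k" using hat_profile_segment[OF k] .
  have "0 < exp (p * t k) * ipw p 0 (t (Suc k) - t k) (hat_piece k j) (hat_piece k j)"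
    using jk ipw_left_piece_pos ipw_right_piece_pos by (auto simp: hat_piece_def)
  also have "\<dots> \<le> gram j j"
    unfolding gram_eq_sum_segments[OF j j] using k segment_diag_nonneg
    by (intro member_le_sum) auto
  finally show ?thesis .
qed

lemma gram_col_diag_dominant: "col_diag_dominant gram n c"
  unfolding col_diag_dominant_def
proof (intro ballI conjI)
  fix j assume j: "j \<in> {1..n}"
  show "0 < gram j j" using gram_diag_pos[OF j] .
  have "(\<Sum>i\<in>{1..n}-{j}. \<bar>gram i j\<bar>)
      \<le> (\<Sum>i\<in>{1..n}-{j}. \<Sum>k=1..n-1. exp (p * t k) * \<bar>ipw p 0 (t (Suc k) - t k) (hat_piece k i) (hat_piece k j)\<bar>)"
    using j by (intro sum_mono) (auto simp: gram_eq_sum_segments abs_mult intro: order_trans[OF sum_abs])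
  also have "\<dots> = (\<Sum>k=1..n-1. exp (p * t k) * (\<Sum>i\<in>{1..n}-{j}. \<bar>ipw p 0 (t (Suc k) - t k) (hat_piece k i) (hat_piece k j)\<bar>))"
    unfolding sum_distrib_left by (rule sum.swap)
  also have "\<dots> \<le> (\<Sum>k=1..n-1. exp (p * t k) * (c * ipw p 0 (t (Suc k) - t k) (hat_piece k j) (hat_piece k j)))"
    by (intro sum_mono mult_left_mono segment_offdiag_le) auto
  also have "\<dots> = c * gram j j"
    by (simp add: gram_eq_sum_segments[OF j j] sum_distrib_left mult_ac)
  finally show "(\<Sum>i\<in>{1..n}-{j}. \<bar>gram i j\<bar>) \<le> c * gram j j" .
qed

lemma ipw_hat_one_le:
  assumes j: "j \<in> {1..n}"
  shows "ipw p (t 1) (t n) (hat \<phi> t n j) (\<lambda>_. 1) \<le> M * gram j j"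
  unfolding ipw_hat_one_eq_sum_segments[OF j] gram_eq_sum_segments[OF j j] sum_distrib_left
  by (intro sum_mono) (use segment_moment_le in \<open>auto simp: mult.left_commute\<close>)


lemma hat_in_Uspan:
  assumes "j \<in> {1..n}"
  shows "hat \<phi> t n j \<in> Uspan \<phi> t n"
proof -
  have "hat \<phi> t n j = (\<lambda>s. \<Sum>i=1..n. of_bool (i = j) * hat \<phi> t n i s)"
    using assms by simp
  then show ?thesis unfolding Uspan_def by (intro CollectI exI)
qed

lemma ipw_residual_hat:
  assumes f: "continuous_on {t 1..t n} f" and j: "j \<in> {1..n}"
  shows "ipw p (t 1) (t n) (\<lambda>s. f s - (\<Sum>i=1..n. a i * hat \<phi> t n i s)) (hat \<phi> t n j)
    = ipw p (t 1) (t n) f (hat \<phi> t n j) - (\<Sum>i=1..n. a i * gram i j)"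
proof -
  have "ipw p (t 1) (t n) (\<lambda>s. \<Sum>i=1..n. a i * hat \<phi> t n i s) (hat \<phi> t n j) = (\<Sum>i=1..n. a i * gram i j)"
    unfolding gram_def
    by (subst ipw_commute, subst ipw_sum_right[OF continuous_on_hat[OF j] _ continuous_on_hat])
       (auto simp: ipw_commute)
  then show ?thesis
    using f j continuous_on_hat by (subst ipw_diff_left) (auto intro!: continuous_intros)
qed

lemma orthogonal_iff_normal_equations:
  assumes f: "continuous_on {t 1..t n} f"
  shows "(\<forall>v\<in>Uspan \<phi> t n. ipw p (t 1) (t n) (\<lambda>s. f s - (\<Sum>i=1..n. a i * hat \<phi> t n i s)) v = 0)
    \<longleftrightarrow> (\<forall>j\<in>{1..n}. (\<Sum>i=1..n. a i * gram i j) = ipw p (t 1) (t n) f (hat \<phi> t n j))"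
proof
  assume "\<forall>v\<in>Uspan \<phi> t n. ipw p (t 1) (t n) (\<lambda>s. f s - (\<Sum>i=1..n. a i * hat \<phi> t n i s)) v = 0"
  then show "\<forall>j\<in>{1..n}. (\<Sum>i=1..n. a i * gram i j) = ipw p (t 1) (t n) f (hat \<phi> t n j)"
    using hat_in_Uspan ipw_residual_hat[OF f] by fastforce
next
  assume normal: "\<forall>j\<in>{1..n}. (\<Sum>i=1..n. a i * gram i j) = ipw p (t 1) (t n) f (hat \<phi> t n j)"
  show "\<forall>v\<in>Uspan \<phi> t n. ipw p (t 1) (t n) (\<lambda>s. f s - (\<Sum>i=1..n. a i * hat \<phi> t n i s)) v = 0"
  proof
    fix v assume "v \<in> Uspan \<phi> t n"
    then obtain b where v: "v = (\<lambda>s. \<Sum>j=1..n. b j * hat \<phi> t n j s)" unfolding Uspan_def by auto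
    have "continuous_on {t 1..t n} (\<lambda>s. f s - (\<Sum>i=1..n. a i * hat \<phi> t n i s))"
      using f continuous_on_hat by (auto intro!: continuous_intros)
    then show "ipw p (t 1) (t n) (\<lambda>s. f s - (\<Sum>i=1..n. a i * hat \<phi> t n i s)) v = 0"
      unfolding v using normal ipw_residual_hat[OF f]
      by (subst ipw_sum_right[OF _ _ continuous_on_hat]) (auto intro!: sum.neutral)
  qed
qed

lemma proj_eq_hat_combination:
  assumes f: "continuous_on {t 1..t n} f"
  obtains a where "proj p \<phi> t n f = (\<lambda>s. \<Sum>j=1..n. a j * hat \<phi> t n j s)"
    and "\<forall>j\<in>{1..n}. (\<Sum>i=1..n. a i * gram i j) = ipw p (t 1) (t n) f (hat \<phi> t n j)"
proof -
  obtain a where a: "\<forall>j\<in>{1..n}. (\<Sum>i=1..n. a i * gram i j) = ipw p (t 1) (t n) f (hat \<phi> t n j)"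
    using col_diag_dominant_solvable[OF gram_col_diag_dominant] c_pos c_less_1 by fastforce
  have "proj p \<phi> t n f = (\<lambda>s. \<Sum>j=1..n. a j * hat \<phi> t n j s)"
    unfolding proj_def
  proof (rule the_equality)
    show "(\<lambda>s. \<Sum>j=1..n. a j * hat \<phi> t n j s) \<in> Uspan \<phi> t n \<and>
        (\<forall>v\<in>Uspan \<phi> t n. ipw p (t 1) (t n) (\<lambda>s. f s - (\<Sum>j=1..n. a j * hat \<phi> t n j s)) v = 0)"
      using orthogonal_iff_normal_equations[OF f] a unfolding Uspan_def by auto
  next
    fix u assume u: "u \<in> Uspan \<phi> t n \<and> (\<forall>v\<in>Uspan \<phi> t n. ipw p (t 1) (t n) (\<lambda>s. f s - u s) v = 0)"
    then obtain b where b: "u = (\<lambda>s. \<Sum>j=1..n. b j * hat \<phi> t n j s)" unfolding Uspan_def by auto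
    have "\<forall>j\<in>{1..n}. (\<Sum>i=1..n. b i * gram i j) = ipw p (t 1) (t n) f (hat \<phi> t n j)"
      using u orthogonal_iff_normal_equations[OF f, of b] unfolding b by auto
    then have "\<forall>j\<in>{1..n}. (\<Sum>i=1..n. (b i - a i) * gram i j) = 0"
      using a by (simp add: left_diff_distrib sum_subtractf)
    then have "\<bar>b i - a i\<bar> \<le> 0 / (1 - c)" if "i \<in> {1..n}" for i
      by (rule col_diag_dominant_coeff_bound[OF gram_col_diag_dominant c_less_1 _ _ that]) auto
    then show "u = (\<lambda>s. \<Sum>j=1..n. a j * hat \<phi> t n j s)"
      unfolding b by (auto intro!: sum.cong)
  qed
  with a that show ?thesis by blast
qed

lemma abs_ipw_hat_le:
  assumes f: "continuous_on {t 1..t n} f" and j: "j \<in> {1..n}"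
  shows "\<bar>ipw p (t 1) (t n) f (hat \<phi> t n j)\<bar> \<le> supn (t 1) (t n) f * ipw p (t 1) (t n) (hat \<phi> t n j) (\<lambda>_. 1)"
proof -
  have "\<bar>ipw p (t 1) (t n) f (hat \<phi> t n j)\<bar>
      \<le> integral {t 1..t n} (\<lambda>s. supn (t 1) (t n) f * (hat \<phi> t n j s * 1 * exp (p * s)))"
    unfolding ipw_def real_norm_def[symmetric]
  proof (rule integral_norm_bound_integral)
    fix s assume s: "s \<in> {t 1..t n}"
    have "\<bar>f s\<bar> * (hat \<phi> t n j s * exp (p * s)) \<le> supn (t 1) (t n) f * (hat \<phi> t n j s * exp (p * s))"
      using abs_le_supn[OF f s] hat_nonneg[OF j s] by (intro mult_right_mono) auto
    then show "norm (f s * hat \<phi> t n j s * exp (p * s)) \<le> supn (t 1) (t n) f * (hat \<phi> t n j s * 1 * exp (p * s))"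
      using hat_nonneg[OF j s] by (simp add: abs_mult mult.assoc)
  qed (use f continuous_on_hat[OF j] in \<open>auto intro!: integrable_continuous_interval continuous_intros\<close>)
  then show ?thesis unfolding ipw_def by simp
qed

lemma supn_proj_le:
  assumes f: "continuous_on {t 1..t n} f"
  shows "supn (t 1) (t n) (proj p \<phi> t n f)
    \<le> Sup ((\<lambda>s. \<Sum>j=1..n. \<bar>hat \<phi> t n j s\<bar>) ` {t 1..t n}) * (supn (t 1) (t n) f * M / (1 - c))"
proof -
  define R where "R = supn (t 1) (t n) f * M / (1 - c)"
  have t1n: "t 1 \<le> t n" using nodes_le[of 1 n] n_ge_3 by simp
  obtain a where proj: "proj p \<phi> t n f = (\<lambda>s. \<Sum>j=1..n. a j * hat \<phi> t n j s)"
    and normal: "\<forall>j\<in>{1..n}. (\<Sum>i=1..n. a i * gram i j) = ipw p (t 1) (t n) f (hat \<phi> t n j)"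
    using proj_eq_hat_combination[OF f] .
  have N: "supn (t 1) (t n) f \<ge> 0" using abs_le_supn[OF f, of "t 1"] t1n by auto
  have "\<forall>j\<in>{1..n}. \<bar>ipw p (t 1) (t n) f (hat \<phi> t n j)\<bar> \<le> (supn (t 1) (t n) f * M) * gram j j"
  proof
    fix j assume j: "j \<in> {1..n}"
    have "\<bar>ipw p (t 1) (t n) f (hat \<phi> t n j)\<bar> \<le> supn (t 1) (t n) f * ipw p (t 1) (t n) (hat \<phi> t n j) (\<lambda>_. 1)"
      by (rule abs_ipw_hat_le[OF f j])
    also have "\<dots> \<le> supn (t 1) (t n) f * (M * gram j j)"
      by (rule mult_left_mono[OF ipw_hat_one_le[OF j] N])
    finally show "\<bar>ipw p (t 1) (t n) f (hat \<phi> t n j)\<bar> \<le> (supn (t 1) (t n) f * M) * gram j j"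
      by (simp only: mult.assoc)
  qed
  then have a: "\<bar>a j\<bar> \<le> R" if "j \<in> {1..n}" for j
    unfolding R_def by (rule col_diag_dominant_coeff_bound[OF gram_col_diag_dominant c_less_1 normal _ that])
  have "R \<ge> 0" using a[of 1] n_ge_3 by simp
  have bdd: "bdd_above ((\<lambda>s. \<Sum>j=1..n. \<bar>hat \<phi> t n j s\<bar>) ` {t 1..t n})"
    using continuous_on_hat
    by (intro bounded_imp_bdd_above compact_imp_bounded compact_continuous_image continuous_intros) auto
  have "\<bar>proj p \<phi> t n f s\<bar> \<le> Sup ((\<lambda>s. \<Sum>j=1..n. \<bar>hat \<phi> t n j s\<bar>) ` {t 1..t n}) * R"
    if s: "s \<in> {t 1..t n}" for s
  proof -
    have "\<bar>proj p \<phi> t n f s\<bar> \<le> (\<Sum>j=1..n. R * \<bar>hat \<phi> t n j s\<bar>)"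
      unfolding proj by (rule order_trans[OF sum_abs]) (auto simp: abs_mult intro!: sum_mono mult_right_mono a)
    also have "\<dots> \<le> R * Sup ((\<lambda>s. \<Sum>j=1..n. \<bar>hat \<phi> t n j s\<bar>) ` {t 1..t n})"
      unfolding sum_distrib_left[symmetric] using \<open>R \<ge> 0\<close> s bdd
      by (intro mult_left_mono cSup_upper) auto
    finally show ?thesis by (simp add: mult.commute)
  qed
  then show ?thesis unfolding supn_def R_def using t1n by (intro cSup_least) auto
qed

lemma proj_opnorm_le:
  "bdd_above (proj_ratios p \<phi> t n) \<and>
   proj_opnorm p \<phi> t n \<le> Sup ((\<lambda>s. \<Sum>j=1..n. \<bar>hat \<phi> t n j s\<bar>) ` {t 1..t n}) * (M / (1 - c))"
proof
  define SH where "SH = Sup ((\<lambda>s. \<Sum>j=1..n. \<bar>hat \<phi> t n j s\<bar>) ` {t 1..t n})"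
  have t1n: "t 1 \<le> t n" using nodes_le[of 1 n] n_ge_3 by simp
  have le: "r \<le> SH * (M / (1 - c))" if r_mem: "r \<in> proj_ratios p \<phi> t n" for r
  proof -
    obtain f where f: "continuous_on {t 1..t n} f" "supn (t 1) (t n) f \<noteq> 0"
      and r: "r = supn (t 1) (t n) (proj p \<phi> t n f) / supn (t 1) (t n) f"
      using r_mem unfolding proj_ratios_def by blast
    define N where "N = supn (t 1) (t n) f"
    have "0 \<le> N" using abs_le_supn[OF f(1), of "t 1"] t1n unfolding N_def by simp
    then have "0 < N" using f(2) unfolding N_def by simp
    have "supn (t 1) (t n) (proj p \<phi> t n f) \<le> SH * (N * M / (1 - c))"
      using supn_proj_le[OF f(1)] unfolding SH_def N_def .
    also have "\<dots> = SH * (M / (1 - c)) * N" by simp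
    finally show ?thesis unfolding r N_def[symmetric] using \<open>0 < N\<close> by (simp add: pos_divide_le_eq)
  qed
  have "supn (t 1) (t n) (\<lambda>_. 1) = 1" unfolding supn_def using t1n by (simp add: image_constant_conv)
  then have "supn (t 1) (t n) (proj p \<phi> t n (\<lambda>_. 1)) / supn (t 1) (t n) (\<lambda>_. 1) \<in> proj_ratios p \<phi> t n"
    unfolding proj_ratios_def mem_Collect_eq by (intro exI[of _ "\<lambda>_. 1"]) simp
  then have ne: "proj_ratios p \<phi> t n \<noteq> {}" by blast
  show "bdd_above (proj_ratios p \<phi> t n)" by (rule bdd_aboveI[OF le])
  show "proj_opnorm p \<phi> t n \<le> SH * (M / (1 - c))"
    unfolding proj_opnorm_def by (rule cSup_least[OF ne le])
qed

end

theorem mainTheorem13: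
  fixes \<delta> p c :: real and n :: nat and \<phi> :: "nat \<Rightarrow> real \<Rightarrow> real" and t :: "nat \<Rightarrow> real"
  assumes "\<delta> > 0" and "n \<ge> 3"
    and "\<forall>j\<in>{1..n-1}. continuous_on {-\<delta>..\<delta>} (\<phi> j) \<and> strict_mono_on {-\<delta>..\<delta>} (\<phi> j) \<and> \<phi> j 0 = 0"
    and "\<forall>j\<in>{1..n-1}. t j < t (j+1)"
    and "\<forall>j\<in>{1..n-1}. t (j+1) - t j \<le> \<delta>"
    and "0 < c" and "c < 1"
    and "Max ((\<lambda>j. max (Aphi p (\<phi> j) (t (j+1) - t j)) (Bphi p (\<phi> j) (t (j+1) - t j))) ` {1..n-1}) \<le> c"
  shows "row_dd (\<lambda>i j. ipw p (t 1) (t n) (hat \<phi> t n i) (hat \<phi> t n j)) n c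
       \<and> bdd_above (proj_ratios p \<phi> t n)
       \<and> proj_opnorm p \<phi> t n \<le>
           Sup ((\<lambda>s. \<Sum>j=1..n. \<bar>hat \<phi> t n j s\<bar>) ` {t 1..t n}) *
           (Max ((\<lambda>j. max (Cphi p (\<phi> j) (t (j+1) - t j)) (Dphi p (\<phi> j) (t (j+1) - t j))) ` {1..n-1}) / (1 - c))"
proof -
  define M where "M = Max ((\<lambda>j. max (Cphi p (\<phi> j) (t (j+1) - t j)) (Dphi p (\<phi> j) (t (j+1) - t j))) ` {1..n-1})"
  have AB: "\<forall>k\<in>{1..n-1}. Aphi p (\<phi> k) (t (Suc k) - t k) \<le> c \<and> Bphi p (\<phi> k) (t (Suc k) - t k) \<le> c"
  proof
    fix k assume "k \<in> {1..n-1}"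
    then have "max (Aphi p (\<phi> k) (t (k+1) - t k)) (Bphi p (\<phi> k) (t (k+1) - t k))
      \<le> Max ((\<lambda>j. max (Aphi p (\<phi> j) (t (j+1) - t j)) (Bphi p (\<phi> j) (t (j+1) - t j))) ` {1..n-1})"
      by (intro Max_ge finite_imageI imageI) auto
    then show "Aphi p (\<phi> k) (t (Suc k) - t k) \<le> c \<and> Bphi p (\<phi> k) (t (Suc k) - t k) \<le> c"
      using assms(8) by simp
  qed
  have CD: "\<forall>k\<in>{1..n-1}. Cphi p (\<phi> k) (t (Suc k) - t k) \<le> M \<and> Dphi p (\<phi> k) (t (Suc k) - t k) \<le> M"
  proof
    fix k assume "k \<in> {1..n-1}"
    then have "max (Cphi p (\<phi> k) (t (k+1) - t k)) (Dphi p (\<phi> k) (t (k+1) - t k)) \<le> M"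
      unfolding M_def by (intro Max_ge finite_imageI imageI) auto
    then show "Cphi p (\<phi> k) (t (Suc k) - t k) \<le> M \<and> Dphi p (\<phi> k) (t (Suc k) - t k) \<le> M"
      by simp
  qed
  interpret hat_nodes_dominant \<delta> p n \<phi> t c M
    using assms AB CD by unfold_locales simp_all
  have "row_dd gram n c"
    by (rule row_dd_if_col_diag_dominant[OF _ gram_col_diag_dominant]) (simp add: gram_def ipw_commute)
  then show ?thesis using proj_opnorm_le unfolding gram_def M_def by simp
qed

end
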